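(* Let $\beta,\gamma,\mu>0$, $0<p<\tfrac12$, $\delta=\beta/(\gamma+\mu)>4(1-p)$, and suppose $\frac{\gamma}{\mu}>F(\delta)$. Then the Jacobian at $E_1$ of the $(S_0,S_1,A)$ subsystem of the temporary adoption model has exactly one negative real eigenvalue, and its other two eigenvalues have positive real part (they are either both real and positive or a complex conjugate pair with positive real part). In particular $E_1$ has a two-dimensional unstable manifold.
   Context: The temporary adoption model is $S_0'=\mu-\beta S_0A-\mu S_0$, $S_1'=(1-p)\beta S_0A-\beta S_1A-\mu S_1$, $A'=\beta(pS_0+S_1)A-(\gamma+\mu)A$, $R'=\gamma A-\mu R$, with $S_0+S_1+A+R=1$. $E_1$ is the equilibrium with $A=A_1=\tfrac12(1+\tfrac{\gamma}{\mu})^{-1}\big[1-2\delta^{-1}+\sqrt{1-4(1-p)\delta^{-1}}\big]$, $S_0=1/(\delta(\frac{\gamma}{\mu}+1)A+1)$, $S_1=(1-p)\delta(\frac{\gamma}{\mu}+1)A/(\delta(\frac{\gamma}{\mu}+1)A+1)^2$, $R=\frac{\gamma}{\mu}A$. The function $F$ is $F(\delta)=\frac{\delta^2}{2(1-2p)}\cdot\frac{[1+\sqrt{1-4(1-p)\delta^{-1}}]^3}{(\delta-2)+\delta\sqrt{1-4(1-p)\delta^{-1}}}-1$. *)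

theory Defs
  imports "HOL-Analysis.Analysis"
begin

definition F_fun :: "real \<Rightarrow> real \<Rightarrow> real" where
  "F_fun p \<delta> = \<delta>^2 / (2 * (1 - 2*p)) *
     ((1 + sqrt (1 - 4*(1-p)/\<delta>))^3 / ((\<delta> - 2) + \<delta> * sqrt (1 - 4*(1-p)/\<delta>))) - 1"

definition A1 :: "real \<Rightarrow> real \<Rightarrow> real \<Rightarrow> real \<Rightarrow> real" where
  "A1 \<beta> \<gamma> \<mu> p = (let \<delta> = \<beta> / (\<gamma> + \<mu>) in
     (1/2) * inverse (1 + \<gamma>/\<mu>) * (1 - 2 / \<delta> + sqrt (1 - 4*(1-p)/\<delta>)))"

definition S0_1 :: "real \<Rightarrow> real \<Rightarrow> real \<Rightarrow> real \<Rightarrow> real" where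
  "S0_1 \<beta> \<gamma> \<mu> p = (let \<delta> = \<beta> / (\<gamma> + \<mu>); A = A1 \<beta> \<gamma> \<mu> p in
     1 / (\<delta> * (\<gamma>/\<mu> + 1) * A + 1))"

definition S1_1 :: "real \<Rightarrow> real \<Rightarrow> real \<Rightarrow> real \<Rightarrow> real" where
  "S1_1 \<beta> \<gamma> \<mu> p = (let \<delta> = \<beta> / (\<gamma> + \<mu>); A = A1 \<beta> \<gamma> \<mu> p in
     (1 - p) * \<delta> * (\<gamma>/\<mu> + 1) * A / (\<delta> * (\<gamma>/\<mu> + 1) * A + 1)^2)"

definition E1 :: "real \<Rightarrow> real \<Rightarrow> real \<Rightarrow> real \<Rightarrow> real^3" where
  "E1 \<beta> \<gamma> \<mu> p = vector [S0_1 \<beta> \<gamma> \<mu> p, S1_1 \<beta> \<gamma> \<mu> p, A1 \<beta> \<gamma> \<mu> p]"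

text \<open>The (S0,S1,A) subsystem of the temporary adoption model; x = (S0,S1,A).\<close>
definition field :: "real \<Rightarrow> real \<Rightarrow> real \<Rightarrow> real \<Rightarrow> real^3 \<Rightarrow> real^3" where
  "field \<beta> \<gamma> \<mu> p x = vector
     [\<mu> - \<beta> * x$1 * x$3 - \<mu> * x$1,
      (1 - p) * \<beta> * x$1 * x$3 - \<beta> * x$2 * x$3 - \<mu> * x$2,
      \<beta> * (p * x$1 + x$2) * x$3 - (\<gamma> + \<mu>) * x$3]"

definition cmat :: "real^'n^'n \<Rightarrow> complex^'n^'n" where
  "cmat J = (\<chi> i j. complex_of_real (J$i$j))"

end

theory Submission
  imports Defs "HOL-Real_Asymp.Real_Asymp"
begin

text \<open>
  Write \<open>u = 1/S0\<close> at \<open>E1\<close>. In terms of \<open>u\<close> the Jacobian of the \<open>(S0, S1, A)\<close> subsystem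
  has characteristic polynomial \<open>x\<^sup>3 + a2 x\<^sup>2 + a1 x + a0\<close> with \<open>a2 = 2\<mu>u\<close> and
  \<open>a0 = (\<gamma> + \<mu>) \<mu>\<^sup>2 (u - 1)(2u - \<delta>) > 0\<close>, so the polynomial has a negative root \<open>r\<close>.
  Dividing it off leaves \<open>x\<^sup>2 + b x + c\<close> with \<open>c > 0\<close> and \<open>a2 a1 - a0 = b (r\<^sup>2 - b r + c)\<close>.
  The hypothesis \<open>\<gamma>/\<mu> > F(\<delta>)\<close> is precisely the failure \<open>a2 a1 < a0\<close> of the Routh-Hurwitz
  condition, hence \<open>b < 0\<close> and both roots of the quadratic lie in the right half plane.
\<close>

lemma cubic_has_negative_root:
  fixes a2 a1 a0 :: real
  assumes "a0 > 0"
  shows "\<exists>r<0. r^3 + a2*r^2 + a1*r + a0 = 0"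
proof -
  define P where "P t = t^3 + a2*t^2 + a1*t + a0" for t
  have "eventually (\<lambda>t. P t < 0) at_bot"
    unfolding P_def by real_asymp
  then obtain N where "\<forall>t\<le>N. P t < 0"
    unfolding eventually_at_bot_linorder by blast
  then obtain t where t: "t < 0" "P t < 0"
    by (intro that[of "min N (-1)"]) auto
  have "continuous_on {t..0} P"
    unfolding P_def by (intro continuous_intros)
  with t obtain r where r: "t \<le> r" "r \<le> 0" "P r = 0"
    using IVT'[of P t 0 0] assms by (auto simp: P_def)
  moreover have "r \<noteq> 0"
    using r(3) assms by (auto simp: P_def)
  ultimately have "r < 0" "P r = 0"
    by auto
  then show ?thesis
    unfolding P_def by blast
qed

lemma monic_quadratic_eq_of_vieta:
  fixes b c z1 z2 x :: "'a :: comm_ring_1"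
  assumes "z1 + z2 = - b" "z1 * z2 = c"
  shows "x^2 + b * x + c = (x - z1) * (x - z2)"
proof -
  have "(x - z1) * (x - z2) = x^2 - (z1 + z2) * x + z1 * z2"
    by (simp add: power2_eq_square algebra_simps)
  with assms show ?thesis
    by simp
qed

lemma monic_quadratic_roots_right_half_plane:
  fixes b c :: real
  assumes "b < 0" "c > 0"
  shows "\<exists>z1 z2. (\<forall>x::complex. x^2 + of_real b * x + of_real c = (x - z1) * (x - z2)) \<and>
           Re z1 > 0 \<and> Re z2 > 0 \<and> ((z1 \<in> \<real> \<and> z2 \<in> \<real>) \<or> (z2 = cnj z1 \<and> Im z1 \<noteq> 0))"
proof -
  define D where "D = b^2 - 4*c"
  note factor = monic_quadratic_eq_of_vieta[where b = "of_real b" and c = "of_real c"]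
  show ?thesis
  proof (cases "D \<ge> 0")
    case True
    define w1 where "w1 = (-b + sqrt D) / 2"
    define w2 where "w2 = (-b - sqrt D) / 2"
    have "sqrt D < sqrt (b^2)"
      using assms by (intro real_sqrt_less_mono) (simp add: D_def)
    then have w2_pos: "0 < w2"
      using assms by (simp add: w2_def)
    have "0 \<le> sqrt D"
      using True by simp
    then have "0 < - b + sqrt D"
      using assms by linarith
    then have w1_pos: "0 < w1"
      unfolding w1_def by simp
    have "w1 * w2 = c"
      using True by (simp add: w1_def w2_def D_def power2_eq_square algebra_simps)
    moreover have "w1 + w2 = - b"
      by (simp add: w1_def w2_def field_simps)
    ultimately have "x^2 + of_real b * x + of_real c = (x - of_real w1) * (x - of_real w2)"
      for x :: complex
      by (intro factor) (simp_all flip: of_real_mult of_real_add)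
    with w1_pos w2_pos show ?thesis
      by (intro exI[of _ "of_real w1"] exI[of _ "of_real w2"]) auto
  next
    case False
    define z where "z = Complex (-b/2) (sqrt (-D) / 2)"
    have "z * cnj z = of_real c"
      using False by (simp add: z_def complex_eq_iff D_def power2_eq_square field_simps)
    moreover have "z + cnj z = - of_real b"
      by (simp add: z_def complex_eq_iff)
    ultimately show ?thesis
      using False assms by (intro exI[of _ z] exI[of _ "cnj z"]) (auto intro!: factor simp: z_def)
  qed
qed

lemma cubic_roots_one_stable_two_unstable:
  fixes a2 a1 a0 :: real
  assumes "a0 > 0" and "a2 * a1 < a0"
  shows "\<exists>r z1 z2. (\<forall>x::complex. x^3 + of_real a2 * x^2 + of_real a1 * x + of_real a0
            = (x - of_real r) * (x - z1) * (x - z2)) \<and> r < 0 \<and> Re z1 > 0 \<and> Re z2 > 0 \<and>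
            ((z1 \<in> \<real> \<and> z2 \<in> \<real>) \<or> (z2 = cnj z1 \<and> Im z1 \<noteq> 0))"
proof -
  obtain r where r: "r < 0" "r^3 + a2*r^2 + a1*r + a0 = 0"
    using cubic_has_negative_root assms(1) by blast
  define b where "b = a2 + r"
  define c where "c = a1 + r * b"
  have a0: "a0 = - r * c"
    using r(2) by (simp add: b_def c_def power2_eq_square power3_eq_cube algebra_simps)
  have "0 < (- r) * c"
    using assms(1) by (simp add: a0)
  with r(1) have "c > 0"
    using zero_less_mult_pos[of "- r" c] by simp
  \<comment> \<open>\<open>-b\<close> is the sum of the two remaining roots\<close>
  have hurwitz: "a2 * a1 - a0 = b * (r^2 - b * r + c)"
    by (simp add: a0 b_def c_def power2_eq_square algebra_simps)
  have "b < 0"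
  proof (rule ccontr)
    assume "\<not> b < 0"
    then have "b * r \<le> 0"
      using r(1) by (simp add: mult_nonneg_nonpos)
    then have "0 < r^2 - b * r + c"
      using \<open>c > 0\<close> zero_le_power2[of r] by linarith
    with \<open>\<not> b < 0\<close> have "b * (r^2 - b * r + c) \<ge> 0"
      by simp
    with hurwitz assms(2) show False by simp
  qed
  then obtain z1 z2 where z: "\<forall>x::complex. x^2 + of_real b * x + of_real c = (x - z1) * (x - z2)"
    and roots: "Re z1 > 0" "Re z2 > 0" "(z1 \<in> \<real> \<and> z2 \<in> \<real>) \<or> (z2 = cnj z1 \<and> Im z1 \<noteq> 0)"
    using monic_quadratic_roots_right_half_plane \<open>c > 0\<close> by blast
  have "x^3 + of_real a2 * x^2 + of_real a1 * x + of_real a0 = (x - of_real r) * (x - z1) * (x - z2)"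
    for x :: complex
  proof -
    have "x^3 + of_real a2 * x^2 + of_real a1 * x + of_real a0
          = (x - of_real r) * (x^2 + of_real b * x + of_real c)"
      by (simp add: a0 b_def c_def power2_eq_square power3_eq_cube algebra_simps)
    then show ?thesis
      using z by (simp add: mult.assoc)
  qed
  with r(1) roots show ?thesis by blast
qed

lemma charpoly_cmat_3:
  fixes J :: "real^3^3" and x :: complex
  shows "det (mat x - cmat J) = x^3 + of_real (-(J$1$1 + J$2$2 + J$3$3)) * x^2
     + of_real (J$1$1*J$2$2 - J$1$2*J$2$1 + J$1$1*J$3$3 - J$1$3*J$3$1 + J$2$2*J$3$3 - J$2$3*J$3$2) * x
     + of_real (- det J)"
  by (simp add: det_3 cmat_def mat_def algebra_simps power2_eq_square power3_eq_cube)

definition field_jacobian :: "real \<Rightarrow> real \<Rightarrow> real \<Rightarrow> real \<Rightarrow> real^3 \<Rightarrow> real^3^3" where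
  "field_jacobian \<beta> \<gamma> \<mu> p x = vector [
     vector [-\<beta>*x$3 - \<mu>, 0, -\<beta>*x$1],
     vector [(1-p)*\<beta>*x$3, -\<beta>*x$3 - \<mu>, (1-p)*\<beta>*x$1 - \<beta>*x$2],
     vector [\<beta>*p*x$3, \<beta>*x$3, \<beta>*(p*x$1 + x$2) - (\<gamma>+\<mu>)]]"

lemma vector_3_eq_axis_sum:
  "(vector [a, b, c] :: real^3) = a *\<^sub>R axis 1 1 + b *\<^sub>R axis 2 1 + c *\<^sub>R axis 3 1"
  by (simp add: vec_eq_iff forall_3 axis_def)

lemma has_derivative_field:
  "(field \<beta> \<gamma> \<mu> p has_derivative (\<lambda>h. field_jacobian \<beta> \<gamma> \<mu> p x *v h)) (at x)"
proof -
  have component: "((\<lambda>y::real^3. y$i) has_derivative (\<lambda>h. h$i)) (at x)" for i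
    by (rule bounded_linear_imp_has_derivative) auto
  have field_eq: "field \<beta> \<gamma> \<mu> p = (\<lambda>y. (\<mu> - \<beta> * y$1 * y$3 - \<mu> * y$1) *\<^sub>R axis 1 1
      + ((1 - p) * \<beta> * y$1 * y$3 - \<beta> * y$2 * y$3 - \<mu> * y$2) *\<^sub>R axis 2 1
      + (\<beta> * (p * y$1 + y$2) * y$3 - (\<gamma> + \<mu>) * y$3) *\<^sub>R axis 3 1)"
    by (simp add: fun_eq_iff field_def vector_3_eq_axis_sum)
  show ?thesis
    unfolding field_eq
    by (auto intro!: derivative_eq_intros component
        simp: fun_eq_iff vec_eq_iff forall_3 axis_def field_jacobian_def matrix_vector_mult_def
          sum_3 algebra_simps)
qed

text \<open>The larger root of \<open>u\<^sup>2 - \<delta> u + \<delta> (1 - p) = 0\<close>; the other root is \<open>\<delta> - u\<close>.\<close>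

definition E1_inv_S0 :: "real \<Rightarrow> real \<Rightarrow> real" where
  "E1_inv_S0 p \<delta> = \<delta> * (1 + sqrt (1 - 4*(1-p)/\<delta>)) / 2"

lemma E1_inv_S0_bounds:
  fixes p \<delta> :: real
  assumes "p < 1/2" "4*(1-p) < \<delta>"
  defines "u \<equiv> E1_inv_S0 p \<delta>"
  shows "u * (\<delta> - u) = \<delta> * (1 - p)" "1 < u" "\<delta> < 2 * u"
proof -
  define s where "s = sqrt (1 - 4*(1-p)/\<delta>)"
  have "\<delta> > 2"
    using assms(1,2) by (simp add: algebra_simps)
  then have "4*(1-p)/\<delta> < 1"
    using assms(2) by simp
  then have s_pos: "0 < s" and s_sq: "s^2 = 1 - 4*(1-p)/\<delta>"
    by (simp_all add: s_def)
  have u: "u = \<delta> * (1 + s) / 2"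
    by (simp add: u_def E1_inv_S0_def s_def)
  have "u * (\<delta> - u) = \<delta>^2 * (1 - s^2) / 4"
    by (simp add: u power2_eq_square field_simps)
  also have "\<dots> = \<delta> * (\<delta> - \<delta> * s^2) / 4"
    by (simp add: power2_eq_square algebra_simps)
  also have "\<delta> * s^2 = \<delta> - 4*(1-p)"
    using \<open>\<delta> > 2\<close> by (simp add: s_sq field_simps)
  finally show "u * (\<delta> - u) = \<delta> * (1 - p)"
    by (simp add: algebra_simps)
  show "\<delta> < 2 * u"
    using \<open>\<delta> > 2\<close> s_pos by (simp add: u)
  have "0 < \<delta> * s"
    using \<open>\<delta> > 2\<close> s_pos by simp
  with \<open>\<delta> > 2\<close> show "1 < u"
    unfolding u by (simp add: algebra_simps)
qed

lemma E1_eq_E1_inv_S0: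
  fixes \<beta> \<gamma> \<mu> p :: real
  assumes "\<beta> > 0" "\<gamma> > 0" "\<mu> > 0"
  defines "u \<equiv> E1_inv_S0 p (\<beta> / (\<gamma> + \<mu>))"
  shows "E1 \<beta> \<gamma> \<mu> p = vector [1/u, (1-p)*(u-1)/u^2, \<mu>*(u-1)/\<beta>]"
proof -
  define G where "G = \<gamma> + \<mu>"
  define \<delta> where "\<delta> = \<beta> / G"
  define s where "s = sqrt (1 - 4*(1-p)/\<delta>)"
  have "G > 0" "\<delta> > 0"
    using assms by (simp_all add: G_def \<delta>_def)
  have \<beta>: "\<beta> = \<delta> * G" and u: "u = \<delta> * (1 + s) / 2"
    using \<open>G > 0\<close> by (simp_all add: \<delta>_def u_def E1_inv_S0_def s_def G_def)
  have "inverse (1 + \<gamma>/\<mu>) = \<mu> / G"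
    using assms(2,3) by (simp add: G_def field_simps)
  then have "A1 \<beta> \<gamma> \<mu> p = (1/2) * (\<mu> / G) * (1 - 2/\<delta> + s)"
    unfolding A1_def Let_def G_def[symmetric] \<delta>_def[symmetric] s_def[symmetric] by simp
  also have "\<dots> = \<mu> * (u - 1) / \<beta>"
    using \<open>G > 0\<close> \<open>\<delta> > 0\<close> by (simp add: u \<beta> field_simps)
  finally have A: "A1 \<beta> \<gamma> \<mu> p = \<mu> * (u - 1) / \<beta>" .
  have "\<gamma>/\<mu> + 1 = G / \<mu>"
    using assms(3) by (simp add: G_def field_simps)
  then have "\<delta> * (\<gamma>/\<mu> + 1) = \<beta> / \<mu>"
    by (simp add: \<beta>)
  then have "\<delta> * (\<gamma>/\<mu> + 1) * A1 \<beta> \<gamma> \<mu> p = u - 1"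
    using assms(1,3) by (simp add: A)
  then have T: "\<delta> * ((\<gamma>/\<mu> + 1) * A1 \<beta> \<gamma> \<mu> p) = u - 1"
    by (simp only: mult.assoc)
  have "S0_1 \<beta> \<gamma> \<mu> p = 1/u" "S1_1 \<beta> \<gamma> \<mu> p = (1-p)*(u-1)/u^2"
    unfolding S0_1_def S1_1_def Let_def G_def[symmetric] \<delta>_def[symmetric] mult.assoc T
    by simp_all
  then show ?thesis
    by (simp add: E1_def A)
qed

lemma F_fun_eq_E1_inv_S0:
  fixes p \<delta> :: real
  assumes "p < 1/2" "4*(1-p) < \<delta>"
  defines "u \<equiv> E1_inv_S0 p \<delta>"
  shows "F_fun p \<delta> = 2 * u^3 / ((u - 1) * \<delta> * (1 - 2*p)) - 1"
proof -
  define s where "s = sqrt (1 - 4*(1-p)/\<delta>)"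
  have "\<delta> > 2" "1 < u" "2*p < 1"
    using E1_inv_S0_bounds[OF assms(1,2)] assms(1,2) by (simp_all add: u_def algebra_simps)
  have "1 + s = 2 * u / \<delta>" "(\<delta> - 2) + \<delta> * s = 2 * (u - 1)"
    using \<open>\<delta> > 2\<close> by (simp_all add: u_def E1_inv_S0_def s_def field_simps)
  then have "F_fun p \<delta> = \<delta>^2 / (2 * (1 - 2*p)) * ((2 * u / \<delta>)^3 / (2 * (u - 1))) - 1"
    unfolding F_fun_def s_def[symmetric] by simp
  also have "\<dots> = 2 * u^3 / ((u - 1) * \<delta> * (1 - 2*p)) - 1"
  proof -
    define w q where "w = u - 1" and "q = 1 - 2*p"
    have "w \<noteq> 0" "q \<noteq> 0" "\<delta> \<noteq> 0"
      using \<open>\<delta> > 2\<close> \<open>1 < u\<close> \<open>2*p < 1\<close> by (simp_all add: w_def q_def)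
    then have "\<delta>^2 / (2 * q) * ((2 * u / \<delta>)^3 / (2 * w)) = 2 * u^3 / (w * \<delta> * q)"
      by (simp add: field_simps power2_eq_square power3_eq_cube)
    then show ?thesis
      by (simp add: w_def q_def)
  qed
  finally show ?thesis .
qed

lemma charpoly_field_jacobian_at_E1:
  fixes \<beta> \<gamma> \<mu> p \<delta> u :: real and x :: complex
  assumes \<beta>: "\<beta> = \<delta> * (\<gamma> + \<mu>)" and u: "u * (\<delta> - u) = \<delta> * (1 - p)"
    and nonzero: "u \<noteq> 0" "\<delta> \<noteq> 0" "\<gamma> + \<mu> \<noteq> 0"
  shows "det (mat x - cmat (field_jacobian \<beta> \<gamma> \<mu> p (vector [1/u, (1-p)*(u-1)/u^2, \<mu>*(u-1)/\<beta>])))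
    = x^3 + of_real (2*\<mu>*u) * x^2 + of_real (\<mu>^2*u^2 + (\<gamma>+\<mu>)*\<mu>*(u-1)*(1-\<delta>+u)) * x
      + of_real ((\<gamma>+\<mu>)*\<mu>^2*(u-1)*(2*u-\<delta>))"
proof -
  define G where "G = \<gamma> + \<mu>"
  define J where "J = field_jacobian \<beta> \<gamma> \<mu> p (vector [1/u, (1-p)*(u-1)/u^2, \<mu>*(u-1)/\<beta>])"
  have "\<beta> \<noteq> 0" "G \<noteq> 0"
    using nonzero by (simp_all add: \<beta> G_def)
  have p: "p = 1 - u * (\<delta> - u) / \<delta>"
    using u nonzero by (simp add: field_simps)
  have J11: "J$1$1 = - \<mu> * u" and J22: "J$2$2 = - \<mu> * u"
    using \<open>\<beta> \<noteq> 0\<close> by (simp_all add: J_def field_jacobian_def field_simps)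
  have J12: "J$1$2 = 0" and J13: "J$1$3 = - \<beta> / u"
    by (simp_all add: J_def field_jacobian_def)
  have J21: "J$2$1 = (1-p) * \<mu> * (u-1)" and J31: "J$3$1 = p * \<mu> * (u-1)"
    and J32: "J$3$2 = \<mu> * (u-1)"
    using \<open>\<beta> \<noteq> 0\<close> by (simp_all add: J_def field_jacobian_def)
  have J23: "J$2$3 = (1-p) * \<beta> / u^2"
    using nonzero by (simp add: J_def field_jacobian_def field_simps power2_eq_square)
  have J33: "J$3$3 = 0" \<comment> \<open>\<open>E1\<close> lies on the nullcline \<open>A' = 0\<close> with \<open>A \<noteq> 0\<close>\<close>
  proof -
    have "J$3$3 = \<beta> * (u - (1-p)) / u^2 - G"
      using nonzero by (simp add: J_def field_jacobian_def G_def field_simps power2_eq_square)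
    also have "\<dots> = 0"
      using nonzero unfolding p \<beta> G_def[symmetric] by (simp add: field_simps power2_eq_square)
    finally show ?thesis .
  qed
  have "-(J$1$1 + J$2$2 + J$3$3) = 2*\<mu>*u"
    unfolding J11 J22 J33 by simp
  moreover have "J$1$1*J$2$2 - J$1$2*J$2$1 + J$1$1*J$3$3 - J$1$3*J$3$1 + J$2$2*J$3$3 - J$2$3*J$3$2
      = \<mu>^2*u^2 + G*\<mu>*(u-1)*(1-\<delta>+u)"
    using nonzero \<open>G \<noteq> 0\<close> unfolding J11 J12 J13 J22 J23 J31 J32 J33 \<beta> G_def[symmetric]
    by (simp add: p field_simps power2_eq_square)
  moreover have "- det J = G*\<mu>^2*(u-1)*(2*u-\<delta>)"
    using nonzero \<open>G \<noteq> 0\<close> unfolding det_3 J11 J12 J13 J21 J22 J23 J31 J32 J33 \<beta> G_def[symmetric]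
    by (simp add: p field_simps power2_eq_square)
  ultimately show ?thesis
    unfolding J_def[symmetric] charpoly_cmat_3 G_def by simp
qed

lemma hurwitz_violated_at_E1:
  fixes \<gamma> \<mu> p \<delta> u :: real
  assumes "\<mu> > 0" "p < 1/2" "\<delta> > 0" "1 < u" "u * (\<delta> - u) = \<delta> * (1 - p)"
    and F: "2 * u^3 / ((u - 1) * \<delta> * (1 - 2*p)) - 1 < \<gamma> / \<mu>"
  shows "(2*\<mu>*u) * (\<mu>^2*u^2 + (\<gamma>+\<mu>)*\<mu>*(u-1)*(1-\<delta>+u)) < (\<gamma>+\<mu>)*\<mu>^2*(u-1)*(2*u-\<delta>)"
proof -
  define D where "D = (u - 1) * \<delta> * (1 - 2*p)"
  have "D > 0"
    using assms(2-4) by (simp add: D_def)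
  have "(\<gamma> + \<mu>) / \<mu> = \<gamma> / \<mu> + 1"
    using assms(1) by (simp add: field_simps)
  with F have "2 * u^3 / D < (\<gamma> + \<mu>) / \<mu>"
    by (simp add: D_def)
  then have "2 * \<mu> * u^3 < (\<gamma> + \<mu>) * D"
    using \<open>D > 0\<close> assms(1) by (simp add: field_simps)
  then have "\<mu>^2 * (2 * \<mu> * u^3 - (\<gamma> + \<mu>) * D) < 0"
    using assms(1) by (simp add: mult_pos_neg)
  moreover have "D = (u - 1) * (2 * (u * (\<delta> - u)) - \<delta>)"
    unfolding assms(5) by (simp add: D_def algebra_simps)
  ultimately show ?thesis
    by (simp add: algebra_simps power2_eq_square power3_eq_cube)
qed

theorem mainTheorem9:
  fixes \<beta> \<gamma> \<mu> p :: real
  assumes "\<beta> > 0" "\<gamma> > 0" "\<mu> > 0" "0 < p" "p < 1/2"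
    and "\<beta> / (\<gamma> + \<mu>) > 4 * (1 - p)"
    and "\<gamma> / \<mu> > F_fun p (\<beta> / (\<gamma> + \<mu>))"
  shows "\<exists>J :: real^3^3.
           (field \<beta> \<gamma> \<mu> p has_derivative (\<lambda>h. J *v h)) (at (E1 \<beta> \<gamma> \<mu> p)) \<and>
           (\<exists>r :: real. \<exists>z1 z2 :: complex.
              (\<forall>x :: complex. det (mat x - cmat J) = (x - complex_of_real r) * (x - z1) * (x - z2)) \<and>
              r < 0 \<and> Re z1 > 0 \<and> Re z2 > 0 \<and>
              ((z1 \<in> \<real> \<and> z2 \<in> \<real>) \<or> (z2 = cnj z1 \<and> Im z1 \<noteq> 0)))"
proof -
  define \<delta> where "\<delta> = \<beta> / (\<gamma> + \<mu>)"
  define u where "u = E1_inv_S0 p \<delta>"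
  define J where "J = field_jacobian \<beta> \<gamma> \<mu> p (E1 \<beta> \<gamma> \<mu> p)"
  have \<delta>: "4 * (1 - p) < \<delta>" "\<delta> > 0" "\<beta> = \<delta> * (\<gamma> + \<mu>)"
    using assms(1-3,6) by (simp_all add: \<delta>_def)
  have u: "u * (\<delta> - u) = \<delta> * (1 - p)" "1 < u" "\<delta> < 2 * u"
    using E1_inv_S0_bounds[OF assms(5) \<delta>(1)] by (simp_all add: u_def)
  have E1: "E1 \<beta> \<gamma> \<mu> p = vector [1/u, (1-p)*(u-1)/u^2, \<mu>*(u-1)/\<beta>]"
    using E1_eq_E1_inv_S0[OF assms(1-3)] by (simp add: u_def \<delta>_def)
  have "det (mat x - cmat J) = x^3 + of_real (2*\<mu>*u) * x^2
      + of_real (\<mu>^2*u^2 + (\<gamma>+\<mu>)*\<mu>*(u-1)*(1-\<delta>+u)) * x + of_real ((\<gamma>+\<mu>)*\<mu>^2*(u-1)*(2*u-\<delta>))"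
    for x
    unfolding J_def E1
    by (rule charpoly_field_jacobian_at_E1) (use \<delta> u assms(2,3) in auto)
  moreover have "(\<gamma>+\<mu>)*\<mu>^2*(u-1)*(2*u-\<delta>) > 0"
    using assms(2,3) u(2,3) by simp
  moreover have "(2*\<mu>*u) * (\<mu>^2*u^2 + (\<gamma>+\<mu>)*\<mu>*(u-1)*(1-\<delta>+u)) < (\<gamma>+\<mu>)*\<mu>^2*(u-1)*(2*u-\<delta>)"
    using hurwitz_violated_at_E1[OF assms(3,5) \<delta>(2) u(2,1)] assms(7)
      F_fun_eq_E1_inv_S0[OF assms(5) \<delta>(1)] by (simp add: u_def \<delta>_def)
  ultimately obtain r z1 z2 where "\<forall>x. det (mat x - cmat J) = (x - of_real r) * (x - z1) * (x - z2)"
    and "r < 0" "Re z1 > 0" "Re z2 > 0" "(z1 \<in> \<real> \<and> z2 \<in> \<real>) \<or> (z2 = cnj z1 \<and> Im z1 \<noteq> 0)"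
    using cubic_roots_one_stable_two_unstable by metis
  with has_derivative_field show ?thesis
    unfolding J_def by blast
qed

end
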